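(* Let $X(t),t\in\mathbb{Z}^d$, be a stationary max-stable rf with unit Fréchet marginals and spectral tail rf $\Theta$. Then for every $x=(x_i)_{i\in\mathbb{Z}^d}$ with finitely many components in $(0,\infty)$ and all other components equal to $\infty$, $$-\ln P(X(i)\le x_i,\ i\in\mathbb{Z}^d)=\sum_{i\in\mathbb{Z}^d}\frac1{x_i}P\big(\mathcal I_A(\Theta/(B^{-i}x))=0\big),$$ where $\Theta/(B^{-i}x)=(\Theta(j)/x_{j+i})_{j\in\mathbb{Z}^d}$, with $a/\infty=0$. In particular the law of $X$ is determined by the law of $\Theta$.
   Context: $E=[0,\infty)^{\mathbb{Z}^d}$; shift $(B^hf)(t)=f(t-h)$; $\mathcal S(f)=\sum_tf(t)$. A max-stable rf $X$ with unit Fréchet marginals has a spectral rf $Z$: non-negative, $E Z(t)=1$, with $-\ln P(X(t_i)\le x_i,i\le n)=E[\max_{i\le n}Z(t_i)/x_i]$; stationarity of $X$ is equivalent to $E[Z(h)F(Z)]=E[Z(0)F(B^hZ)]$ for all $h$ and all 0-homogeneous measurable $F:E\to[0,\infty]$. The spectral tail rf $\Theta$ is given by $P(\Theta\in A)=E[Z(0)\mathbf 1(Z/Z(0)\in A)]$. Fix a translation-invariant total order on $\mathbb{Z}^d$; the first maximum functional is $\mathcal I_A(f)=\min\{j:f(j)=\max_if(i)\}$ if $\mathcal S(f)<\infty$ and $\max_if(i)>0$, and $\mathcal I_A(f)=\infty$ otherwise. *)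

theory Defs
  imports "HOL-Probability.Probability"
begin

definition transl_inv_total_order :: "(int^'d \<Rightarrow> int^'d \<Rightarrow> bool) \<Rightarrow> bool" where
  "transl_inv_total_order le \<longleftrightarrow>
     (\<forall>a. le a a) \<and> (\<forall>a b. le a b \<and> le b a \<longrightarrow> a = b) \<and>
     (\<forall>a b c. le a b \<and> le b c \<longrightarrow> le a c) \<and> (\<forall>a b. le a b \<or> le b a) \<and>
     (\<forall>a b h. le a b \<longrightarrow> le (a + h) (b + h))"

text \<open>First maximum functional; None encodes the value infinity.
  S(f) < infinity is rendered as summability of f over the whole index set.\<close>
definition first_max :: "('i \<Rightarrow> 'i \<Rightarrow> bool) \<Rightarrow> ('i \<Rightarrow> real) \<Rightarrow> 'i option" where
  "first_max le f =
     (if f summable_on UNIV \<and> (SUP i. f i) > 0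
      then Some (THE j. f j = (SUP i. f i) \<and> (\<forall>k. f k = (SUP i. f i) \<longrightarrow> le j k))
      else None)"

end

theory Submission
  imports Defs
begin

text \<open>Let \<open>\<nu>(S, w) = E max {w(t) Z(t) | t \<in> S}\<close>. The spectral representation gives
  \<open>-ln P(X(t) \<le> 1/w(t), t \<in> S) = \<nu>(S, w)\<close>, so stationarity of \<open>X\<close> makes \<open>\<nu>\<close> invariant under
  translating \<open>S\<close> together with \<open>w\<close>. Splitting the maximum according to the first index at which
  it is attained gives \<open>\<nu>(S, w) = \<Sum>\<^sub>i w(i) q(i)\<close> with \<open>q(i) = E[Z(i); i is the first maximiser of w Z on S]\<close>.
  Each \<open>q(i)\<close> is a one-sided derivative of \<open>\<nu>\<close> in \<open>w(i)\<close>, taken after slightly inflating the weights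
  of the indices preceding \<open>i\<close> so that ties are resolved in favour of the first maximiser; hence
  \<open>q(i)\<close> is translation invariant as well. Translated to \<open>i = 0\<close> it is
  \<open>E[Z(0); 0 is the first maximiser]\<close>, which by the definition of \<open>\<Theta>\<close> is \<open>P(I\<^sub>A(\<Theta>/B\<^sup>-\<^sup>ix) = 0)\<close>.\<close>

lemma transl_inv_total_orderD:
  assumes "transl_inv_total_order le"
  shows "le a a" "le a b \<Longrightarrow> le b a \<Longrightarrow> a = b" "le a b \<Longrightarrow> le b c \<Longrightarrow> le a c"
    "le a b \<or> le b a" "le (a + h) (b + h) \<longleftrightarrow> le a b"
proof -
  show "le a a" "le a b \<Longrightarrow> le b a \<Longrightarrow> a = b" "le a b \<Longrightarrow> le b c \<Longrightarrow> le a c" "le a b \<or> le b a"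
    using assms unfolding transl_inv_total_order_def by blast+
  have "le a b \<Longrightarrow> le (a + h) (b + h)" for a b h
    using assms unfolding transl_inv_total_order_def by blast
  from this[of a b h] this[of "a + h" "b + h" "- h"] show "le (a + h) (b + h) \<longleftrightarrow> le a b"
    by auto
qed

lemma transl_inv_total_order_least:
  assumes order: "transl_inv_total_order le" and "finite A" "A \<noteq> {}"
  obtains m where "m \<in> A" "\<And>k. k \<in> A \<Longrightarrow> le m k"
proof -
  from assms(2,3) have "\<exists>m\<in>A. \<forall>k\<in>A. le m k"
  proof (induction A rule: finite_ne_induct)
    case (singleton a)
    then show ?case using transl_inv_total_orderD(1)[OF order] by auto
  next
    case (insert a A)
    then obtain m where m: "m \<in> A" "\<forall>k\<in>A. le m k" by blast
    show ?case
    proof (cases "le a m")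
      case True
      then show ?thesis using m transl_inv_total_orderD(1,3)[OF order] by blast
    next
      case False
      then show ?thesis using m transl_inv_total_orderD(1,4)[OF order] by blast
    qed
  qed
  then show thesis using that by blast
qed

definition first_argmax_on :: "('i \<Rightarrow> 'i \<Rightarrow> bool) \<Rightarrow> 'i set \<Rightarrow> ('i \<Rightarrow> real) \<Rightarrow> 'i \<Rightarrow> bool" where
  "first_argmax_on le S u p \<longleftrightarrow> (\<forall>k\<in>S. u k \<le> u p \<and> (u k = u p \<longrightarrow> le p k))"

lemma first_argmax_on_scale:
  assumes "c > 0"
  shows "first_argmax_on le S (\<lambda>k. c * u k) p \<longleftrightarrow> first_argmax_on le S u p"
  using assms by (simp add: first_argmax_on_def)

lemma first_argmax_on_unique:
  assumes order: "transl_inv_total_order le"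
    and "first_argmax_on le S u p" "first_argmax_on le S u q" "p \<in> S" "q \<in> S"
  shows "p = q"
proof -
  have "u p = u q" using assms(2-5) unfolding first_argmax_on_def by (simp add: order_antisym)
  then have "le p q" "le q p" using assms(2-5) unfolding first_argmax_on_def by auto
  then show ?thesis by (rule transl_inv_total_orderD(2)[OF order])
qed

lemma first_argmax_on_exists:
  assumes order: "transl_inv_total_order le" and "finite S" "S \<noteq> {}"
  obtains p where "p \<in> S" "u p = Max (u ` S)" "first_argmax_on le S u p"
proof -
  let ?m = "Max (u ` S)"
  have "finite {i\<in>S. u i = ?m}" "{i\<in>S. u i = ?m} \<noteq> {}"
    using assms Max_in[of "u ` S"] by fastforce+
  then obtain p where "p \<in> {i\<in>S. u i = ?m}" and least: "\<And>k. k \<in> {i\<in>S. u i = ?m} \<Longrightarrow> le p k"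
    by (rule transl_inv_total_order_least[OF order]) auto
  then have p: "p \<in> S" "u p = ?m" by auto
  have "first_argmax_on le S u p"
    unfolding first_argmax_on_def using p least assms(2) by auto
  with p show thesis by (rule that)
qed

lemma Max_eq_sum_first_argmax:
  assumes order: "transl_inv_total_order le" and "finite S" "S \<noteq> {}"
  shows "Max (u ` S) = (\<Sum>i\<in>S. if first_argmax_on le S u i then u i else 0)"
proof -
  obtain p where p: "p \<in> S" "u p = Max (u ` S)" "first_argmax_on le S u p"
    using first_argmax_on_exists[OF assms] .
  have "(\<Sum>i\<in>S. if first_argmax_on le S u i then u i else 0) = (\<Sum>i\<in>S. if i = p then u i else 0)"
    using first_argmax_on_unique[OF order _ p(3) _ p(1)] p(3) by (intro sum.cong) auto
  also have "\<dots> = Max (u ` S)" using assms(2) p(1,2) by simp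
  finally show ?thesis ..
qed

lemma first_max_eq_Some_iff:
  fixes g :: "int^'d \<Rightarrow> real"
  assumes order: "transl_inv_total_order le" and "finite S" and zero: "\<And>j. j \<notin> S \<Longrightarrow> g j = 0"
  shows "first_max le g = Some p \<longleftrightarrow> g p > 0 \<and> first_argmax_on le S g p"
proof -
  have "g summable_on S" using \<open>finite S\<close> by simp
  then have summable: "g summable_on UNIV"
    using summable_on_cong_neutral[of S UNIV g g] zero by auto
  have "finite (range g)"
    by (rule finite_subset[of _ "insert 0 (g ` S)"]) (use zero \<open>finite S\<close> in auto)
  then have sup: "(SUP i. g i) = Max (range g)" and ge: "\<And>k. g k \<le> Max (range g)"
    and attained: "Max (range g) \<in> range g"
    by (simp_all add: cSup_eq_Max)
  define m where "m = Max (range g)"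
  let ?P = "\<lambda>j. g j = m \<and> (\<forall>k. g k = m \<longrightarrow> le j k)"
  have first_max: "first_max le g = (if m > 0 then Some (THE j. ?P j) else None)"
    unfolding first_max_def sup m_def using summable by simp
  have P_iff: "?P j \<longleftrightarrow> g j > 0 \<and> first_argmax_on le S g j" if "m > 0" for j
  proof
    assume "?P j"
    then show "g j > 0 \<and> first_argmax_on le S g j"
      using that ge unfolding first_argmax_on_def m_def by auto
  next
    assume j: "g j > 0 \<and> first_argmax_on le S g j"
    then have "g k \<le> g j" for k
      using zero unfolding first_argmax_on_def by (cases "k \<in> S") auto
    then have "g j = m" using attained ge unfolding m_def by (metis antisym rangeE)
    moreover have "le j k" if "g k = m" for k
      using j zero \<open>g j = m\<close> \<open>m > 0\<close> that unfolding first_argmax_on_def by (cases "k \<in> S") auto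
    ultimately show "?P j" by blast
  qed
  have P_unique: "?P j \<Longrightarrow> ?P j' \<Longrightarrow> j = j'" for j j'
    using transl_inv_total_orderD(2)[OF order] by blast
  show ?thesis
  proof (cases "m > 0")
    case True
    have "finite {j. g j = m}" "{j. g j = m} \<noteq> {}"
      using finite_subset[OF _ \<open>finite S\<close>, of "{j. g j = m}"] zero True attained
      unfolding m_def by force+
    then obtain j where "j \<in> {j. g j = m}" "\<And>k. k \<in> {j. g j = m} \<Longrightarrow> le j k"
      by (rule transl_inv_total_order_least[OF order]) auto
    then have ex1: "\<exists>!j. ?P j" using P_unique by blast
    have "(THE j. ?P j) = p \<longleftrightarrow> ?P p"
      using theI'[OF ex1] the1_equality[OF ex1] by blast
    then show ?thesis using first_max True P_iff by simp
  next
    case False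
    then show ?thesis using first_max ge[of p] unfolding m_def by auto
  qed
qed

definition weighted_max :: "'i set \<Rightarrow> ('i \<Rightarrow> real) \<Rightarrow> ('i \<Rightarrow> real) \<Rightarrow> real" where
  "weighted_max S w z = Max ((\<lambda>t. w t * z t) ` S)"

text \<open>Used with \<open>e = 1/(n+1)\<^sup>2\<close>, negligible against the inflation \<open>1 + 1/(n+1)\<close> of the indices
  preceding \<open>p\<close>: the increment then raises the maximum exactly when \<open>p\<close> is the first maximiser.\<close>
definition tilt :: "('i \<Rightarrow> 'i \<Rightarrow> bool) \<Rightarrow> ('i \<Rightarrow> real) \<Rightarrow> 'i \<Rightarrow> real \<Rightarrow> nat \<Rightarrow> 'i \<Rightarrow> real" where
  "tilt le b p e n k =
     (if k = p then b p + e else if le p k then b k else (1 + 1 / real (Suc n)) * b k)"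

definition tilt_rest :: "('i \<Rightarrow> 'i \<Rightarrow> bool) \<Rightarrow> 'i set \<Rightarrow> ('i \<Rightarrow> real) \<Rightarrow> 'i \<Rightarrow> nat \<Rightarrow> ('i \<Rightarrow> real) \<Rightarrow> real" where
  "tilt_rest le S b p n z = Max (insert 0 ((\<lambda>t. tilt le b p 0 n t * z t) ` (S - {p})))"

lemma tilt_ge:
  assumes "b k \<ge> 0" "k \<noteq> p"
  shows "tilt le b p e n k \<ge> b k"
  using assms by (auto simp: tilt_def field_simps)

lemma tilt_pos:
  assumes "b k > 0" "b p > 0" "e \<ge> 0"
  shows "tilt le b p e n k > 0"
  using assms by (simp add: tilt_def add_pos_nonneg)

lemma Max_insert_nonneg:
  fixes a :: real
  assumes "finite A" "\<And>y. y \<in> A \<Longrightarrow> y \<ge> 0" "a \<ge> 0"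
  shows "Max (insert a A) = max a (Max (insert 0 A))"
proof (cases "A = {}")
  case False
  then have "Max A \<ge> 0" using assms Max_ge_iff[OF assms(1) False] by blast
  then show ?thesis using assms(1) False by simp
qed (use assms in simp)

lemma weighted_max_tilt:
  assumes "finite S" "p \<in> S" "\<And>k. k \<in> S \<Longrightarrow> b k > 0" "\<And>k. k \<in> S \<Longrightarrow> z k \<ge> 0" "e \<ge> 0"
  shows "weighted_max S (tilt le b p e n) z = max ((b p + e) * z p) (tilt_rest le S b p n z)"
proof -
  have "(\<lambda>t. tilt le b p e n t * z t) ` S
      = insert (tilt le b p e n p * z p) ((\<lambda>t. tilt le b p e n t * z t) ` (S - {p}))"
    using assms(2) by (metis image_insert insert_Diff)
  also have "\<dots> = insert ((b p + e) * z p) ((\<lambda>t. tilt le b p 0 n t * z t) ` (S - {p}))"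
    unfolding tilt_def by (intro arg_cong2[where f=insert] image_cong) auto
  finally have image: "(\<lambda>t. tilt le b p e n t * z t) ` S = \<dots>" .
  have "tilt le b p 0 n t * z t \<ge> 0" if "t \<in> S - {p}" for t
  proof -
    have "0 \<le> b t" "0 \<le> z t" using that assms(3,4) by (auto intro: less_imp_le)
    moreover have "b t \<le> tilt le b p 0 n t" using that \<open>0 \<le> b t\<close> by (intro tilt_ge) auto
    ultimately show ?thesis by (meson mult_nonneg_nonneg order_trans)
  qed
  moreover have "(b p + e) * z p \<ge> 0" using assms(2-5) by (simp add: less_imp_le)
  ultimately show ?thesis
    unfolding weighted_max_def tilt_rest_def image
    by (intro Max_insert_nonneg) (use assms(1) in auto)
qed

lemma tilt_rest_le_eventually:
  assumes "finite S" "p \<in> S" "\<And>k. k \<in> S \<Longrightarrow> b k > 0" "\<And>k. k \<in> S \<Longrightarrow> z k \<ge> 0"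
    and first: "first_argmax_on le S (\<lambda>k. b k * z k) p"
  shows "eventually (\<lambda>n. tilt_rest le S b p n z \<le> b p * z p) sequentially"
proof -
  have "eventually (\<lambda>n. tilt le b p 0 n t * z t \<le> b p * z p) sequentially" if t: "t \<in> S - {p}" for t
  proof (cases "le p t")
    case True
    then show ?thesis using first t by (simp add: first_argmax_on_def tilt_def)
  next
    case False
    then have "b t * z t < b p * z p" using first t by (force simp: first_argmax_on_def)
    moreover have "(\<lambda>n. (1 + 1 / real (Suc n)) * (b t * z t)) \<longlonglongrightarrow> (1 + 0) * (b t * z t)"
      by (intro tendsto_intros LIMSEQ_Suc lim_inverse_n')
    ultimately have "eventually (\<lambda>n. (1 + 1 / real (Suc n)) * (b t * z t) < b p * z p) sequentially"
      by (simp add: order_tendstoD(2))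
    then show ?thesis
      by eventually_elim (use False t in \<open>simp add: tilt_def mult.assoc\<close>)
  qed
  then have "eventually (\<lambda>n. \<forall>t\<in>S - {p}. tilt le b p 0 n t * z t \<le> b p * z p) sequentially"
    using assms(1) by (simp add: eventually_ball_finite)
  moreover have "b p * z p \<ge> 0" using assms(2-4) by (simp add: order.strict_implies_order)
  ultimately show ?thesis
    by (auto simp: tilt_rest_def assms(1) elim: eventually_mono)
qed

lemma tilt_rest_gt_eventually:
  assumes "finite S" "p \<in> S" "\<And>k. k \<in> S \<Longrightarrow> b k > 0" "\<And>k. k \<in> S \<Longrightarrow> z k \<ge> 0"
    and "le p p" "z p > 0" and not_first: "\<not> first_argmax_on le S (\<lambda>k. b k * z k) p"
  shows "eventually (\<lambda>n. b p * z p + z p / real (Suc n)^2 < tilt_rest le S b p n z) sequentially"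
proof -
  let ?c = "b p * z p"
  have c: "?c > 0" using assms(2,3,6) by simp
  obtain t where t: "t \<in> S" "\<not> (b t * z t \<le> ?c \<and> (b t * z t = ?c \<longrightarrow> le p t))"
    using not_first unfolding first_argmax_on_def by blast
  have "t \<noteq> p" using t \<open>le p p\<close> by auto
  have inv_Suc: "(\<lambda>n. 1 / real (Suc n)) \<longlonglongrightarrow> 0"
    by (intro LIMSEQ_Suc lim_inverse_n')
  have "eventually (\<lambda>n. ?c + z p / real (Suc n)^2 < tilt le b p 0 n t * z t) sequentially"
  proof (cases "b t * z t > ?c")
    case True
    have "(\<lambda>n. ?c + z p * (1 / real (Suc n)) ^ 2) \<longlonglongrightarrow> ?c + z p * 0 ^ 2"
      by (intro tendsto_intros inv_Suc)
    then have "eventually (\<lambda>n. ?c + z p / real (Suc n)^2 < b t * z t) sequentially"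
      using True by (simp add: order_tendstoD(2) power_one_over)
    moreover have "b t * z t \<le> tilt le b p 0 n t * z t" for n
      using tilt_ge[OF _ \<open>t \<noteq> p\<close>, of b le 0 n] assms(3,4) t(1)
      by (simp add: less_imp_le mult_right_mono)
    ultimately show ?thesis by (auto elim!: eventually_mono dest: less_le_trans)
  next
    case False
    then have eq: "b t * z t = ?c" and "\<not> le p t" using t by auto
    then have tilted: "tilt le b p 0 n t * z t = ?c + ?c / real (Suc n)" for n
      using \<open>t \<noteq> p\<close> by (simp add: tilt_def field_simps)
    have "(\<lambda>n. z p * (1 / real (Suc n))) \<longlonglongrightarrow> z p * 0"
      by (intro tendsto_intros inv_Suc)
    then have "eventually (\<lambda>n. z p / real (Suc n) < ?c) sequentially"
      using c by (simp add: order_tendstoD(2))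
    then show ?thesis
    proof eventually_elim
      case (elim n)
      have "z p / real (Suc n)^2 = (z p / real (Suc n)) / real (Suc n)"
        by (simp add: power2_eq_square)
      also have "\<dots> < ?c / real (Suc n)"
        using elim by (intro divide_strict_right_mono) auto
      finally show ?case using tilted by simp
    qed
  qed
  moreover have "tilt le b p 0 n t * z t \<le> tilt_rest le S b p n z" for n
    unfolding tilt_rest_def using t(1) \<open>t \<noteq> p\<close> assms(1) by (intro Max_ge) auto
  ultimately show ?thesis by (auto elim!: eventually_mono dest: less_le_trans)
qed

lemma tilt_difference_eventually:
  assumes "finite S" "p \<in> S" "\<And>k. k \<in> S \<Longrightarrow> b k > 0" "\<And>k. k \<in> S \<Longrightarrow> z k \<ge> 0" "le p p"
  shows "eventually (\<lambda>n. real (Suc n)^2 *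
      (weighted_max S (tilt le b p (1 / real (Suc n)^2) n) z - weighted_max S (tilt le b p 0 n) z)
      = (if first_argmax_on le S (\<lambda>k. b k * z k) p then z p else 0)) sequentially"
proof -
  let ?c = "b p * z p" and ?R = "tilt_rest le S b p"
  have difference: "real (Suc n)^2 *
      (weighted_max S (tilt le b p (1 / real (Suc n)^2) n) z - weighted_max S (tilt le b p 0 n) z)
      = real (Suc n)^2 * (max (?c + z p / real (Suc n)^2) (?R n z) - max ?c (?R n z))" for n
    using weighted_max_tilt[OF assms(1-4)] by (simp add: distrib_right)
  consider "z p = 0" | "z p > 0" "first_argmax_on le S (\<lambda>k. b k * z k) p"
    | "z p > 0" "\<not> first_argmax_on le S (\<lambda>k. b k * z k) p"
    using assms(2,4) by force
  then show ?thesis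
  proof cases
    case 1
    then show ?thesis unfolding difference by simp
  next
    case 2
    have "eventually (\<lambda>n. ?R n z \<le> ?c) sequentially"
      by (rule tilt_rest_le_eventually) (use assms 2 in auto)
    then show ?thesis
      unfolding difference
    proof eventually_elim
      case (elim n)
      have "z p / real (Suc n)^2 > 0" using 2 by simp
      with elim have "max (?c + z p / real (Suc n)^2) (?R n z) = ?c + z p / real (Suc n)^2"
        "max ?c (?R n z) = ?c" by auto
      then show ?case using 2 by simp
    qed
  next
    case 3
    have "eventually (\<lambda>n. ?c + z p / real (Suc n)^2 < ?R n z) sequentially"
      by (rule tilt_rest_gt_eventually) (use assms 3 in auto)
    then show ?thesis
      unfolding difference
    proof eventually_elim
      case (elim n)
      have "z p / real (Suc n)^2 > 0" using 3 by simp
      with elim have "max (?c + z p / real (Suc n)^2) (?R n z) = ?R n z" "max ?c (?R n z) = ?R n z"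
        by auto
      then show ?case using 3 by simp
    qed
  qed
qed

lemma tilt_difference_bound:
  assumes "finite S" "p \<in> S" "\<And>k. k \<in> S \<Longrightarrow> b k > 0" "\<And>k. k \<in> S \<Longrightarrow> z k \<ge> 0"
  shows "\<bar>real (Suc n)^2 *
      (weighted_max S (tilt le b p (1 / real (Suc n)^2) n) z - weighted_max S (tilt le b p 0 n) z)\<bar>
      \<le> z p"
proof -
  let ?c = "b p * z p" and ?R = "tilt_rest le S b p n z" and ?d = "z p / real (Suc n)^2"
  have "?d \<ge> 0" using assms(2,4) by simp
  then have "\<bar>max (?c + ?d) ?R - max ?c ?R\<bar> \<le> ?d"
    by (auto simp: max_def)
  then have "real (Suc n)^2 * \<bar>max (?c + ?d) ?R - max ?c ?R\<bar> \<le> z p"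
    by (simp add: field_simps)
  then show ?thesis
    using weighted_max_tilt[OF assms] by (simp add: distrib_right abs_mult)
qed

lemma tilt_translate:
  assumes "transl_inv_total_order le"
  shows "tilt le b p e n (k + p) = tilt le (\<lambda>k. b (k + p)) 0 e n k"
  using transl_inv_total_orderD(5)[OF assms, of 0 p k] by (simp add: tilt_def)

locale spectral_rf =
  fixes N :: "'b measure" and Z :: "'b \<Rightarrow> int^'d \<Rightarrow> real" and le :: "int^'d \<Rightarrow> int^'d \<Rightarrow> bool"
  assumes order: "transl_inv_total_order le"
    and prob_space_N: "prob_space N"
    and Z_measurable[measurable]: "\<And>t. (\<lambda>\<omega>. Z \<omega> t) \<in> borel_measurable N"
    and Z_nonneg: "\<And>\<omega> t. \<omega> \<in> space N \<Longrightarrow> Z \<omega> t \<ge> 0"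
    and Z_integrable: "\<And>t. integrable N (\<lambda>\<omega>. Z \<omega> t)"
begin

definition expected_max :: "(int^'d) set \<Rightarrow> (int^'d \<Rightarrow> real) \<Rightarrow> real" where
  "expected_max S w = (\<integral>\<omega>. weighted_max S w (Z \<omega>) \<partial>N)"

definition first_argmax_weight :: "(int^'d) set \<Rightarrow> (int^'d \<Rightarrow> real) \<Rightarrow> int^'d \<Rightarrow> real" where
  "first_argmax_weight S b p =
     (\<integral>\<omega>. (if first_argmax_on le S (\<lambda>k. b k * Z \<omega> k) p then Z \<omega> p else 0) \<partial>N)"

lemma weighted_max_measurable[measurable]:
  "finite S \<Longrightarrow> (\<lambda>\<omega>. weighted_max S w (Z \<omega>)) \<in> borel_measurable N"
  unfolding weighted_max_def by measurable

lemma first_argmax_on_measurable[measurable]: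
  "finite S \<Longrightarrow> Measurable.pred N (\<lambda>\<omega>. first_argmax_on le S (\<lambda>k. b k * Z \<omega> k) p)"
  unfolding first_argmax_on_def by measurable

lemma integrable_weighted_max:
  assumes "finite S"
  shows "integrable N (\<lambda>\<omega>. weighted_max S w (Z \<omega>))"
  unfolding weighted_max_def using assms
proof (induction S rule: finite_induct)
  case empty
  then show ?case
    using prob_space.finite_measure[OF prob_space_N] finite_measure.integrable_const by simp
next
  case (insert t S)
  show ?case
  proof (cases "S = {}")
    case False
    have "integrable N (\<lambda>\<omega>. max (w t * Z \<omega> t) (Max ((\<lambda>t. w t * Z \<omega> t) ` S)))"
      using insert.IH by (intro integrable_max integrable_mult_right Z_integrable)
    with insert False show ?thesis by simp
  qed (simp add: Z_integrable)
qed

lemma integrable_first_argmax: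
  assumes "finite S"
  shows "integrable N (\<lambda>\<omega>. if first_argmax_on le S (\<lambda>k. b k * Z \<omega> k) p then Z \<omega> p else 0)"
  by (rule Bochner_Integration.integrable_bound[OF Z_integrable[of p]]) (use assms in auto)

lemma expected_max_eq_sum_first_argmax_weight:
  assumes "finite S" "S \<noteq> {}"
  shows "expected_max S b = (\<Sum>i\<in>S. b i * first_argmax_weight S b i)"
proof -
  have "weighted_max S b (Z \<omega>)
      = (\<Sum>i\<in>S. b i * (if first_argmax_on le S (\<lambda>k. b k * Z \<omega> k) i then Z \<omega> i else 0))" for \<omega>
    unfolding weighted_max_def Max_eq_sum_first_argmax[OF order assms] by (intro sum.cong) auto
  then have "expected_max S b
      = (\<integral>\<omega>. (\<Sum>i\<in>S. b i * (if first_argmax_on le S (\<lambda>k. b k * Z \<omega> k) i then Z \<omega> i else 0)) \<partial>N)"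
    unfolding expected_max_def by simp
  also have "\<dots> = (\<Sum>i\<in>S. b i * first_argmax_weight S b i)"
    unfolding first_argmax_weight_def using integrable_first_argmax[OF assms(1)] by simp
  finally show ?thesis .
qed

lemma first_argmax_weight_tilt_limit:
  assumes "finite S" "p \<in> S" "\<And>k. k \<in> S \<Longrightarrow> b k > 0"
  shows "(\<lambda>n. real (Suc n)^2 *
      (expected_max S (tilt le b p (1 / real (Suc n)^2) n) - expected_max S (tilt le b p 0 n)))
      \<longlonglongrightarrow> first_argmax_weight S b p"
proof -
  define D where "D n \<omega> = real (Suc n)^2 *
      (weighted_max S (tilt le b p (1 / real (Suc n)^2) n) (Z \<omega>) - weighted_max S (tilt le b p 0 n) (Z \<omega>))"
    for n \<omega>
  have "(\<lambda>n. \<integral>\<omega>. D n \<omega> \<partial>N)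
      \<longlonglongrightarrow> (\<integral>\<omega>. (if first_argmax_on le S (\<lambda>k. b k * Z \<omega> k) p then Z \<omega> p else 0) \<partial>N)"
  proof (rule integral_dominated_convergence[where w = "\<lambda>\<omega>. Z \<omega> p"])
    show "AE \<omega> in N. norm (D n \<omega>) \<le> Z \<omega> p" for n
    proof (rule AE_I2)
      fix \<omega> assume "\<omega> \<in> space N"
      then show "norm (D n \<omega>) \<le> Z \<omega> p"
        unfolding D_def real_norm_def by (intro tilt_difference_bound) (use assms Z_nonneg in auto)
    qed
    show "AE \<omega> in N. (\<lambda>n. D n \<omega>)
        \<longlonglongrightarrow> (if first_argmax_on le S (\<lambda>k. b k * Z \<omega> k) p then Z \<omega> p else 0)"
    proof (rule AE_I2)
      fix \<omega> assume "\<omega> \<in> space N"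
      then have "eventually (\<lambda>n. D n \<omega>
          = (if first_argmax_on le S (\<lambda>k. b k * Z \<omega> k) p then Z \<omega> p else 0)) sequentially"
        unfolding D_def
        by (intro tilt_difference_eventually) (use assms Z_nonneg transl_inv_total_orderD(1)[OF order] in auto)
      then show "(\<lambda>n. D n \<omega>) \<longlonglongrightarrow> (if first_argmax_on le S (\<lambda>k. b k * Z \<omega> k) p then Z \<omega> p else 0)"
        by (rule tendsto_eventually)
    qed
  qed (use assms(1) Z_integrable in \<open>simp_all add: D_def\<close>)
  moreover have "(\<integral>\<omega>. D n \<omega> \<partial>N) = real (Suc n)^2 *
      (expected_max S (tilt le b p (1 / real (Suc n)^2) n) - expected_max S (tilt le b p 0 n))" for n
    unfolding D_def expected_max_def using integrable_weighted_max[OF assms(1)] by simp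
  ultimately show ?thesis unfolding first_argmax_weight_def by simp
qed

end

locale stationary_spectral_rf = spectral_rf N Z le
  for N :: "'b measure" and Z :: "'b \<Rightarrow> int^'d \<Rightarrow> real" and le :: "int^'d \<Rightarrow> int^'d \<Rightarrow> bool" +
  fixes M :: "'a measure" and X :: "'a \<Rightarrow> int^'d \<Rightarrow> real"
    and K :: "'c measure" and \<Theta> :: "'c \<Rightarrow> int^'d \<Rightarrow> real"
  assumes prob_space_M: "prob_space M"
    and spectral: "\<And>T (y::int^'d \<Rightarrow> real). finite T \<Longrightarrow> T \<noteq> {} \<Longrightarrow> (\<forall>t\<in>T. y t > 0) \<Longrightarrow>
        - ln (measure M {\<omega>\<in>space M. \<forall>t\<in>T. X \<omega> t \<le> y t})
          = (\<integral>\<omega>. Max ((\<lambda>t. Z \<omega> t / y t) ` T) \<partial>N)"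
    and stationary: "\<And>h T (y::int^'d \<Rightarrow> real). finite T \<Longrightarrow>
        measure M {\<omega>\<in>space M. \<forall>t\<in>T. X \<omega> (t + h) \<le> y t}
          = measure M {\<omega>\<in>space M. \<forall>t\<in>T. X \<omega> t \<le> y t}"
    and spectral_tail: "\<And>A. A \<in> sets (\<Pi>\<^sub>M t\<in>UNIV. (borel :: real measure)) \<Longrightarrow>
        measure K (\<Theta> -` A \<inter> space K)
          = (\<integral>\<omega>. Z \<omega> 0 * indicator A (\<lambda>t. Z \<omega> t / Z \<omega> 0) \<partial>N)"
begin

lemma neg_ln_prob_eq_expected_max:
  assumes "finite S" "S \<noteq> {}" "\<And>t. t \<in> S \<Longrightarrow> w t > 0"
  shows "- ln (measure M {\<omega>\<in>space M. \<forall>t\<in>S. X \<omega> t \<le> 1 / w t}) = expected_max S w"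
proof -
  have "- ln (measure M {\<omega>\<in>space M. \<forall>t\<in>S. X \<omega> t \<le> 1 / w t})
      = (\<integral>\<omega>. Max ((\<lambda>t. Z \<omega> t / (1 / w t)) ` S) \<partial>N)"
    by (rule spectral) (use assms in auto)
  also have "\<dots> = expected_max S w"
    unfolding expected_max_def weighted_max_def by (simp add: mult.commute)
  finally show ?thesis .
qed

lemma expected_max_translate:
  assumes "finite S" "S \<noteq> {}" "\<And>t. t \<in> S \<Longrightarrow> w t > 0"
  shows "expected_max ((\<lambda>k. k - p) ` S) (\<lambda>k. w (k + p)) = expected_max S w"
proof -
  let ?S = "(\<lambda>k. k - p) ` S"
  have "expected_max ?S (\<lambda>k. w (k + p))
      = - ln (measure M {\<omega>\<in>space M. \<forall>t\<in>?S. X \<omega> t \<le> 1 / w (t + p)})"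
    by (rule neg_ln_prob_eq_expected_max[symmetric]) (use assms in auto)
  also have "measure M {\<omega>\<in>space M. \<forall>t\<in>?S. X \<omega> t \<le> 1 / w (t + p)}
      = measure M {\<omega>\<in>space M. \<forall>t\<in>?S. X \<omega> (t + p) \<le> 1 / w (t + p)}"
    using stationary[of ?S p "\<lambda>t. 1 / w (t + p)"] assms(1) by simp
  also have "\<dots> = measure M {\<omega>\<in>space M. \<forall>t\<in>S. X \<omega> t \<le> 1 / w t}"
    by (rule arg_cong[where f = "measure M"]) auto
  also have "- ln \<dots> = expected_max S w"
    by (rule neg_ln_prob_eq_expected_max) (use assms in auto)
  finally show ?thesis .
qed

lemma first_argmax_weight_translate:
  assumes "finite S" "p \<in> S" "\<And>k. k \<in> S \<Longrightarrow> b k > 0"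
  shows "first_argmax_weight ((\<lambda>k. k - p) ` S) (\<lambda>k. b (k + p)) 0 = first_argmax_weight S b p"
proof -
  let ?S = "(\<lambda>k. k - p) ` S" and ?b = "\<lambda>k. b (k + p)"
  have "(\<lambda>n. real (Suc n)^2 *
      (expected_max ?S (tilt le ?b 0 (1 / real (Suc n)^2) n) - expected_max ?S (tilt le ?b 0 0 n)))
      \<longlonglongrightarrow> first_argmax_weight ?S ?b 0"
    by (rule first_argmax_weight_tilt_limit) (use assms in auto)
  moreover have "expected_max ?S (tilt le ?b 0 e n) = expected_max S (tilt le b p e n)" if "e \<ge> 0" for e n
    using expected_max_translate[of S "tilt le b p e n" p] assms that
    by (auto simp: tilt_pos tilt_translate[OF order])
  ultimately have "(\<lambda>n. real (Suc n)^2 *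
      (expected_max S (tilt le b p (1 / real (Suc n)^2) n) - expected_max S (tilt le b p 0 n)))
      \<longlonglongrightarrow> first_argmax_weight ?S ?b 0"
    by simp
  moreover have "(\<lambda>n. real (Suc n)^2 *
      (expected_max S (tilt le b p (1 / real (Suc n)^2) n) - expected_max S (tilt le b p 0 n)))
      \<longlonglongrightarrow> first_argmax_weight S b p"
    by (rule first_argmax_weight_tilt_limit) (use assms in auto)
  ultimately show ?thesis
    by (rule LIMSEQ_unique)
qed

lemma prob_first_max_eq_first_argmax_weight:
  assumes "finite S" "i \<in> S" "\<And>k. k \<in> S \<Longrightarrow> w k > 0" "\<And>k. k \<notin> S \<Longrightarrow> w k = 0"
  shows "measure K {\<omega>\<in>space K. first_max le (\<lambda>j. \<Theta> \<omega> j * w (j + i)) = Some 0}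
    = first_argmax_weight S w i"
proof -
  let ?S = "(\<lambda>k. k - i) ` S" and ?w = "\<lambda>k. w (k + i)"
  define A where "A = {f. 0 < f 0 * w i \<and> first_argmax_on le ?S (\<lambda>j. f j * ?w j) 0}"
  have first_max_iff: "first_max le (\<lambda>j. f j * ?w j) = Some 0 \<longleftrightarrow> f \<in> A" for f
  proof -
    have "f j * ?w j = 0" if "j \<notin> ?S" for j
      using that assms(4)[of "j + i"] by (metis add_diff_cancel image_eqI mult_zero_right)
    then have "first_max le (\<lambda>j. f j * ?w j) = Some 0
        \<longleftrightarrow> 0 < f 0 * ?w 0 \<and> first_argmax_on le ?S (\<lambda>j. f j * ?w j) 0"
      by (intro first_max_eq_Some_iff[OF order]) (use assms(1) in auto)
    then show ?thesis unfolding A_def by simp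
  qed
  have [measurable]: "(\<lambda>f. f k) \<in> borel_measurable (\<Pi>\<^sub>M t\<in>UNIV. (borel :: real measure))" for k
    by (rule measurable_component_singleton) simp
  have [measurable]: "Measurable.pred (\<Pi>\<^sub>M t\<in>UNIV. (borel :: real measure)) (\<lambda>f. f k * c \<le> f 0 * d)"
    "Measurable.pred (\<Pi>\<^sub>M t\<in>UNIV. (borel :: real measure)) (\<lambda>f. f k * c = f 0 * d)" for k c d
    unfolding pred_def by (rule borel_measurable_le borel_measurable_eq; measurable)+
  have "Measurable.pred (\<Pi>\<^sub>M t\<in>UNIV. (borel :: real measure)) (\<lambda>f. f \<in> A)"
    unfolding A_def first_argmax_on_def using assms(1) by measurable
  then have "A \<in> sets (\<Pi>\<^sub>M t\<in>UNIV. (borel :: real measure))"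
    by (simp add: pred_def space_PiM)
  then have "measure K {\<omega>\<in>space K. first_max le (\<lambda>j. \<Theta> \<omega> j * w (j + i)) = Some 0}
      = (\<integral>\<omega>. Z \<omega> 0 * indicator A (\<lambda>t. Z \<omega> t / Z \<omega> 0) \<partial>N)"
    using spectral_tail first_max_iff by (simp add: vimage_def Collect_conj_eq Int_commute)
  also have "\<dots> = first_argmax_weight ?S ?w 0"
    unfolding first_argmax_weight_def
  proof (rule Bochner_Integration.integral_cong[OF refl])
    fix \<omega> assume "\<omega> \<in> space N"
    then consider "Z \<omega> 0 = 0" | "Z \<omega> 0 > 0" using Z_nonneg[of \<omega> 0] by linarith
    then show "Z \<omega> 0 * indicator A (\<lambda>t. Z \<omega> t / Z \<omega> 0)
        = (if first_argmax_on le ?S (\<lambda>k. ?w k * Z \<omega> k) 0 then Z \<omega> 0 else 0)"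
    proof cases
      case 2
      have "first_argmax_on le ?S (\<lambda>j. Z \<omega> j / Z \<omega> 0 * ?w j) 0
          \<longleftrightarrow> first_argmax_on le ?S (\<lambda>j. ?w j * Z \<omega> j) 0"
        using first_argmax_on_scale[of "1 / Z \<omega> 0" le ?S "\<lambda>j. ?w j * Z \<omega> j" 0] 2
        by (simp add: mult.commute)
      then show ?thesis using 2 assms(2,3) by (simp add: A_def indicator_def)
    qed simp
  qed
  also have "\<dots> = first_argmax_weight S w i"
    by (rule first_argmax_weight_translate) (use assms in auto)
  finally show ?thesis .
qed

lemma neg_ln_prob_eq_infsum:
  assumes "finite S" "\<And>k. k \<in> S \<Longrightarrow> w k > 0" "\<And>k. k \<notin> S \<Longrightarrow> w k = 0"
  shows "- ln (measure M {\<omega>\<in>space M. \<forall>t\<in>S. X \<omega> t \<le> 1 / w t})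
    = (\<Sum>\<^sub>\<infinity>i. w i * measure K {\<omega>\<in>space K. first_max le (\<lambda>j. \<Theta> \<omega> j * w (j + i)) = Some 0})"
proof -
  have "measure K {\<omega>\<in>space K. first_max le (\<lambda>j. \<Theta> \<omega> j * w (j + i)) = Some 0}
      = first_argmax_weight S w i" if "i \<in> S" for i
    by (rule prob_first_max_eq_first_argmax_weight) (use assms that in auto)
  then have "(\<Sum>\<^sub>\<infinity>i. w i * measure K {\<omega>\<in>space K. first_max le (\<lambda>j. \<Theta> \<omega> j * w (j + i)) = Some 0})
      = (\<Sum>\<^sub>\<infinity>i\<in>S. w i * first_argmax_weight S w i)"
    using assms(3) by (intro infsum_cong_neutral) auto
  also have "\<dots> = (\<Sum>i\<in>S. w i * first_argmax_weight S w i)"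
    using assms(1) by simp
  also have "\<dots> = - ln (measure M {\<omega>\<in>space M. \<forall>t\<in>S. X \<omega> t \<le> 1 / w t})"
  proof (cases "S = {}")
    case True
    then show ?thesis using prob_space.prob_space[OF prob_space_M] by simp
  next
    case False
    then show ?thesis
      using assms expected_max_eq_sum_first_argmax_weight neg_ln_prob_eq_expected_max by simp
  qed
  finally show ?thesis ..
qed

end

lemma real_of_ereal_inverse_pos:
  assumes "0 < y" "y \<noteq> \<infinity>"
  shows "real_of_ereal (1 / y) > 0"
  using assms by (cases y) (auto simp: one_ereal_def)

lemma ereal_le_iff_le_inverse:
  assumes "0 < y" "y \<noteq> \<infinity>"
  shows "ereal r \<le> y \<longleftrightarrow> r \<le> 1 / real_of_ereal (1 / y)"
  using assms by (cases y) (auto simp: one_ereal_def)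

lemma real_of_ereal_divide:
  assumes "0 < y"
  shows "real_of_ereal (ereal r / y) = r * real_of_ereal (1 / y)"
  using assms by (cases y) (auto simp: one_ereal_def)

theorem mainTheorem7:
  fixes M :: "'a measure" and N :: "'b measure" and K :: "'c measure"
    and X :: "'a \<Rightarrow> int^'d \<Rightarrow> real"
    and Z :: "'b \<Rightarrow> int^'d \<Rightarrow> real"
    and \<Theta> :: "'c \<Rightarrow> int^'d \<Rightarrow> real"
    and le :: "int^'d \<Rightarrow> int^'d \<Rightarrow> bool"
    and x :: "int^'d \<Rightarrow> ereal"
  assumes order: "transl_inv_total_order le"
    and PM: "prob_space M" and PN: "prob_space N" and PK: "prob_space K"
    and X_rv: "\<And>t. (\<lambda>\<omega>. X \<omega> t) \<in> borel_measurable M"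
    and frechet: "\<And>t (y::real). y > 0 \<Longrightarrow>
        measure M {\<omega>\<in>space M. X \<omega> t \<le> y} = exp (- 1 / y)"
    and max_stable: "\<And>T (y::int^'d \<Rightarrow> real) (n::nat). finite T \<Longrightarrow> n \<ge> 1 \<Longrightarrow>
        (\<forall>t\<in>T. y t > 0) \<Longrightarrow>
        measure M {\<omega>\<in>space M. \<forall>t\<in>T. X \<omega> t \<le> real n * y t} ^ n
          = measure M {\<omega>\<in>space M. \<forall>t\<in>T. X \<omega> t \<le> y t}"
    and stationary: "\<And>h T (y::int^'d \<Rightarrow> real). finite T \<Longrightarrow>
        measure M {\<omega>\<in>space M. \<forall>t\<in>T. X \<omega> (t + h) \<le> y t}
          = measure M {\<omega>\<in>space M. \<forall>t\<in>T. X \<omega> t \<le> y t}"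
    and Z_rv: "\<And>t. (\<lambda>\<omega>. Z \<omega> t) \<in> borel_measurable N"
    and Z_nonneg: "\<And>\<omega> t. \<omega> \<in> space N \<Longrightarrow> Z \<omega> t \<ge> 0"
    and Z_mean: "\<And>t. integral\<^sup>L N (\<lambda>\<omega>. Z \<omega> t) = 1"
    and spectral: "\<And>T (y::int^'d \<Rightarrow> real). finite T \<Longrightarrow> T \<noteq> {} \<Longrightarrow> (\<forall>t\<in>T. y t > 0) \<Longrightarrow>
        - ln (measure M {\<omega>\<in>space M. \<forall>t\<in>T. X \<omega> t \<le> y t})
          = integral\<^sup>L N (\<lambda>\<omega>. Max ((\<lambda>t. Z \<omega> t / y t) ` T))"
    and Theta_meas: "\<Theta> \<in> K \<rightarrow>\<^sub>M (\<Pi>\<^sub>M t\<in>UNIV. borel)"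
    and Theta_law: "\<And>A. A \<in> sets (\<Pi>\<^sub>M t\<in>UNIV. (borel :: real measure)) \<Longrightarrow>
        measure K (\<Theta> -` A \<inter> space K)
          = integral\<^sup>L N (\<lambda>\<omega>. Z \<omega> 0 * indicator A (\<lambda>t. Z \<omega> t / Z \<omega> 0))"
    and x_pos: "\<And>i. x i > 0"
    and x_fin: "finite {i. x i \<noteq> \<infinity>}"
  shows "- ln (measure M {\<omega>\<in>space M. \<forall>i. ereal (X \<omega> i) \<le> x i})
       = (\<Sum>\<^sub>\<infinity>i. real_of_ereal (1 / x i) *
            measure K {\<omega>\<in>space K.
               first_max le (\<lambda>j. real_of_ereal (ereal (\<Theta> \<omega> j) / x (j + i))) = Some 0})"
proof -
  have Z_integrable: "integrable N (\<lambda>\<omega>. Z \<omega> t)" for t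
    using Z_mean[of t] not_integrable_integral_eq by fastforce
  interpret stationary_spectral_rf N Z le M X K \<Theta>
    by (intro stationary_spectral_rf.intro spectral_rf.intro stationary_spectral_rf_axioms.intro)
      (fact order PN Z_rv Z_nonneg Z_integrable PM spectral stationary Theta_law)+
  define w where "w t = real_of_ereal (1 / x t)" for t
  let ?S = "{t. x t \<noteq> \<infinity>}"
  have w_pos: "w t > 0" if "t \<in> ?S" for t
    using that x_pos real_of_ereal_inverse_pos unfolding w_def by simp
  have w_zero: "w t = 0" if "t \<notin> ?S" for t
    using that unfolding w_def by simp
  have "ereal r \<le> x i \<longleftrightarrow> (i \<in> ?S \<longrightarrow> r \<le> 1 / w i)" for r i
    using ereal_le_iff_le_inverse[OF x_pos, of i] unfolding w_def by (cases "x i = \<infinity>") auto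
  then have "{\<omega>\<in>space M. \<forall>i. ereal (X \<omega> i) \<le> x i} = {\<omega>\<in>space M. \<forall>t\<in>?S. X \<omega> t \<le> 1 / w t}"
    by auto
  moreover have "real_of_ereal (ereal r / x i) = r * w i" for r i
    unfolding w_def by (rule real_of_ereal_divide[OF x_pos])
  ultimately show ?thesis
    using neg_ln_prob_eq_infsum[OF x_fin w_pos w_zero] unfolding w_def by simp
qed

end
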